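(* Let $\mathcal C$ be a well-formed CCCP configuration such that there is no $\mathcal C'$ with $\mathcal C\to_i\mathcal C'$. Then there is a configuration $\mathcal C''$ with $\mathcal C\to_\sigma\mathcal C''$.
   Context: CCCP syntax. Fix a set of channels (ranged over by $c,d$) and a set of values containing data variables $x,y$ and a special error value $\mathtt{err}$; closed values $v,w$ contain no variables, and each closed value $v$ has a transmission time $\delta_v\in\mathbb{N}$ with $\delta_v\ge 1$. Expressions $e$ are built from values; closed expressions evaluate to closed values via $[\![e]\!]$. Station code (processes) is given by $P,Q ::= c!\langle e\rangle.P \mid \lfloor ?c(x).P\rfloor Q \mid \sigma.P \mid \tau.P \mid P+Q \mid [b]P,Q \mid X \mid \mathbf{0} \mid \mathrm{fix}\,X.P$, where $b$ is either $e_1=e_2$ or $\mathrm{exp}(c)$, $[b]P,Q$ is a conditional (then-branch $P$, else-branch $Q$), $\lfloor ?c(x).P\rfloor Q$ is a receiver on $c$ with timeout branch $Q$ ($x$ bound in $P$), $\sigma.P$ is a one-unit delay and $\sigma^n.P$ denotes $n$ nested delays. System terms are $W ::= P \mid \lfloor ?c(x).P\rfloor \mid W_1|W_2 \mid \nu c{:}(n,v).W$, where $\lfloor ?c(x).P\rfloor$ is an active receiver ($x$ bound in $P$) and $\nu c{:}(n,v).W$ restricts $c$ with local channel state $(n,v)$. In $\mathrm{fix}\,X.P$ every occurrence of $X$ in $P$ is guarded, i.e. lies within a broadcast prefix, a receiver continuation, a timeout branch, a $\sigma$-prefix, or a branch of a conditional. Terms are identified up to $\alpha$-conversion. A channel environment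 is a map $\Gamma$ from channels to $\mathbb{N}\times$(closed values); write $\Gamma\vdash_t c:n$ and $\Gamma\vdash_v c:w$ when $\Gamma(c)=(n,w)$; $c$ is idle in $\Gamma$ if $\Gamma\vdash_t c:0$ and exposed otherwise; $\Gamma[c\mapsto(n,v)]$ is $\Gamma$ updated at $c$; $\Gamma\le\Gamma'$ iff for every $c$, $\Gamma\vdash_t c:n$ and $\Gamma'\vdash_t c:m$ imply $n\le m$. A configuration $\Gamma\triangleright W$ is a channel environment together with a closed system term (no free data or process variables). Intensional semantics. Actions $\lambda$ are $c!v$, $c?v$, $\sigma$, $\tau$. The environment update $\lambda(\Gamma)$ is: $\sigma(\Gamma)(c)=(\max(n-1,0),w)$ whenever $\Gamma(c)=(n,w)$; $c!v(\Gamma)$ agrees with $\Gamma$ except at $c$, where it is $(\delta_v,v)$ if $c$ is idle in $\Gamma$ and $(\max(\delta_v,n),\mathtt{err})$ if $\Gamma\vdash_t c:n>0$; $c?v(\Gamma)=c!v(\Gamma)$; $\tau(\Gamma)=\Gamma$. The predicate $\mathrm{rcv}(W,c)$ on terms is: true for $\lfloor ?d(x).P\rfloor Q$ iff $d=c$; $\mathrm{rcv}(P+Q,c)=\mathrm{rcv}(P,c)\vee\mathrm{rcv}(Q,c)$; $\mathrm{rcv}(\mathrm{fix}\,X.P,c)=\mathrm{rcv}(P,c)$; $\mathrm{rcv}(W_1|W_2,c)=\mathrm{rcv}(W_1,c)\vee\mathrm{rcv}(W_2,c)$; $\mathrm{rcv}(\nu d{:}(n,v).W,c)=\mathrm{rcv}(W,c)$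 (with $d\neq c$ by $\alpha$-conversion); false for all other forms (broadcasts, $\tau.P$, $\sigma.P$, conditionals, $X$, $\mathbf 0$, active receivers). Then $\mathrm{rcv}(\Gamma\triangleright W,c)$ holds iff $c$ is idle in $\Gamma$ and $\mathrm{rcv}(W,c)$. Transitions $\Gamma\triangleright W\xrightarrow{\lambda}W'$ are the least relation closed under: (Snd) $[\![e]\!]=v$ implies $\Gamma\triangleright c!\langle e\rangle.P\xrightarrow{c!v}\sigma^{\delta_v}.P$; (Rcv) $c$ idle in $\Gamma$ implies $\Gamma\triangleright\lfloor ?c(x).P\rfloor Q\xrightarrow{c?v}\lfloor ?c(x).P\rfloor$; (RcvIgn) $\neg\mathrm{rcv}(\Gamma\triangleright W,c)$ implies $\Gamma\triangleright W\xrightarrow{c?v}W$; (Sync) $\Gamma\triangleright W_1\xrightarrow{c!v}W_1'$ and $\Gamma\triangleright W_2\xrightarrow{c?v}W_2'$ imply $\Gamma\triangleright W_1|W_2\xrightarrow{c!v}W_1'|W_2'$, and symmetrically; (RcvPar) $\Gamma\triangleright W_i\xrightarrow{c?v}W_i'$ for $i=1,2$ imply $\Gamma\triangleright W_1|W_2\xrightarrow{c?v}W_1'|W_2'$; (TimeNil) $\Gamma\triangleright\mathbf 0\xrightarrow{\sigma}\mathbf 0$; (Sleep) $\Gamma\triangleright\sigma.P\xrightarrow{\sigma}P$; (ActRcv) $\Gamma\vdash_t c:n$, $n>1$ imply $\Gamma\triangleright\lfloor ?c(x).P\rfloor\xrightarrow{\sigma}\lfloor ?c(x).P\rfloor$;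 (EndRcv) $\Gamma\vdash_t c:1$, $\Gamma\vdash_v c:w$ imply $\Gamma\triangleright\lfloor ?c(x).P\rfloor\xrightarrow{\sigma}\{w/x\}P$; (Timeout) $c$ idle in $\Gamma$ implies $\Gamma\triangleright\lfloor ?c(x).P\rfloor Q\xrightarrow{\sigma}Q$; (RcvLate) $c$ exposed in $\Gamma$ implies $\Gamma\triangleright\lfloor ?c(x).P\rfloor Q\xrightarrow{\tau}\lfloor ?c(x).\{\mathtt{err}/x\}P\rfloor$; (Tau) $\Gamma\triangleright\tau.P\xrightarrow{\tau}P$; (Then)/(Else) $\Gamma\triangleright[b]P,Q\xrightarrow{\tau}\sigma.P$ if $[\![b]\!]_\Gamma$ is true and $\xrightarrow{\tau}\sigma.Q$ otherwise, where $[\![e_1=e_2]\!]_\Gamma$ is true iff $[\![e_1]\!]=[\![e_2]\!]$ and $[\![\mathrm{exp}(c)]\!]_\Gamma$ is true iff $c$ is exposed in $\Gamma$; (TimePar) $\Gamma\triangleright W_i\xrightarrow{\sigma}W_i'$ for $i=1,2$ imply $\Gamma\triangleright W_1|W_2\xrightarrow{\sigma}W_1'|W_2'$; (TauPar) $\Gamma\triangleright W_1\xrightarrow{\tau}W_1'$ implies $\Gamma\triangleright W_1|W_2\xrightarrow{\tau}W_1'|W_2$, and symmetrically; (Rec) $\Gamma\triangleright\{\mathrm{fix}\,X.P/X\}P\xrightarrow{\lambda}W$ implies $\Gamma\triangleright\mathrm{fix}\,X.P\xrightarrow{\lambda}W$; (Sum) for $\lambda\in\{\tau,c!v\}$, $\Gamma\triangleright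 P\xrightarrow{\lambda}W$ implies $\Gamma\triangleright P+Q\xrightarrow{\lambda}W$, and symmetrically; (SumTime) $\Gamma\triangleright P\xrightarrow{\sigma}P'$, $\Gamma\triangleright Q\xrightarrow{\sigma}Q'$ imply $\Gamma\triangleright P+Q\xrightarrow{\sigma}P'+Q'$; (SumRcv) $\Gamma\triangleright P\xrightarrow{c?v}W$ and $\mathrm{rcv}(\Gamma\triangleright P,c)$ imply $\Gamma\triangleright P+Q\xrightarrow{c?v}W$, and symmetrically; (ResI) $\Gamma[c\mapsto(n,v)]\triangleright W\xrightarrow{c!w}W'$ implies $\Gamma\triangleright\nu c{:}(n,v).W\xrightarrow{\tau}\nu c{:}(c!w(\Gamma[c\mapsto(n,v)]))(c).W'$; (ResV) $\Gamma[c\mapsto(n,v)]\triangleright W\xrightarrow{\lambda}W'$ with $c$ not occurring in $\lambda$ implies $\Gamma\triangleright\nu c{:}(n,v).W\xrightarrow{\lambda}\nu c{:}(\lambda(\Gamma[c\mapsto(n,v)]))(c).W'$. Reductions. $\Gamma\triangleright W\to\Gamma'\triangleright W'$ iff $\Gamma\triangleright W\xrightarrow{\lambda}W'$ for some $\lambda\in\{c!v,\sigma,\tau\}$ and $\Gamma'=\lambda(\Gamma)$; it is instantaneous ($\to_i$) if $\lambda\neq\sigma$ and timed ($\to_\sigma$) if $\lambda=\sigma$. Well-formedness. The set of well-formed configurations is the least set such that: $\Gamma\triangleright P$ is well-formed for every closed process $P$; $\Gamma\triangleright\lfloor ?c(x).P\rfloor$ is well-formed whenever $c$ is exposed in $\Gamma$;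 $\Gamma\triangleright W_1|W_2$ is well-formed whenever $\Gamma\triangleright W_1$ and $\Gamma\triangleright W_2$ are; $\Gamma\triangleright\nu c{:}(n,v).W$ is well-formed whenever $\Gamma[c\mapsto(n,v)]\triangleright W$ is. *)

theory Defs
  imports Main
begin

text \<open>Channels 'c, data variables 'x, constants 'k, expression operators 'op,
  process variables 'pv. Values contain data variables, the error value and constants.\<close>

datatype ('x,'k) val = VVar 'x | VErr | VConst 'k

datatype ('x,'k,'op) exp = EVal "('x,'k) val" | EOp 'op "('x,'k,'op) exp list"

datatype ('c,'x,'k,'op) bexp = BEq "('x,'k,'op) exp" "('x,'k,'op) exp" | BExp 'c

datatype ('c,'x,'k,'op,'pv) proc =
    PSnd 'c "('x,'k,'op) exp" "('c,'x,'k,'op,'pv) proc"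
  | PRcv 'c 'x "('c,'x,'k,'op,'pv) proc" "('c,'x,'k,'op,'pv) proc"  (* |?c(x).P|Q *)
  | PSig "('c,'x,'k,'op,'pv) proc"
  | PTau "('c,'x,'k,'op,'pv) proc"
  | PSum "('c,'x,'k,'op,'pv) proc" "('c,'x,'k,'op,'pv) proc"
  | PCond "('c,'x,'k,'op) bexp" "('c,'x,'k,'op,'pv) proc" "('c,'x,'k,'op,'pv) proc"
  | PVar 'pv
  | PNil
  | PFix 'pv "('c,'x,'k,'op,'pv) proc"

datatype ('c,'x,'k,'op,'pv) sys =
    SProc "('c,'x,'k,'op,'pv) proc"
  | SARcv 'c 'x "('c,'x,'k,'op,'pv) proc"                  (* active receiver |?c(x).P| *)
  | SPar "('c,'x,'k,'op,'pv) sys" "('c,'x,'k,'op,'pv) sys"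
  | SRes 'c nat "('x,'k) val" "('c,'x,'k,'op,'pv) sys"

datatype ('c,'x,'k) act = AOut 'c "('x,'k) val" | AIn 'c "('x,'k) val" | ASig | ATau

type_synonym ('c,'x,'k) env = "'c \<Rightarrow> nat \<times> ('x,'k) val"

fun closed_val :: "('x,'k) val \<Rightarrow> bool" where
  "closed_val (VVar x) = False"
| "closed_val VErr = True"
| "closed_val (VConst k) = True"

fun fv_val :: "('x,'k) val \<Rightarrow> 'x set" where
  "fv_val (VVar x) = {x}"
| "fv_val _ = {}"

fun fv_exp :: "('x,'k,'op) exp \<Rightarrow> 'x set" where
  "fv_exp (EVal v) = fv_val v"
| "fv_exp (EOp f es) = (\<Union>e\<in>set es. fv_exp e)"

fun fv_bexp :: "('c,'x,'k,'op) bexp \<Rightarrow> 'x set" where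
  "fv_bexp (BEq e1 e2) = fv_exp e1 \<union> fv_exp e2"
| "fv_bexp (BExp c) = {}"

fun fv_proc :: "('c,'x,'k,'op,'pv) proc \<Rightarrow> 'x set" where
  "fv_proc (PSnd c e P) = fv_exp e \<union> fv_proc P"
| "fv_proc (PRcv c x P Q) = (fv_proc P - {x}) \<union> fv_proc Q"
| "fv_proc (PSig P) = fv_proc P"
| "fv_proc (PTau P) = fv_proc P"
| "fv_proc (PSum P Q) = fv_proc P \<union> fv_proc Q"
| "fv_proc (PCond b P Q) = fv_bexp b \<union> fv_proc P \<union> fv_proc Q"
| "fv_proc (PVar X) = {}"
| "fv_proc PNil = {}"
| "fv_proc (PFix X P) = fv_proc P"

fun fpv_proc :: "('c,'x,'k,'op,'pv) proc \<Rightarrow> 'pv set" where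
  "fpv_proc (PSnd c e P) = fpv_proc P"
| "fpv_proc (PRcv c x P Q) = fpv_proc P \<union> fpv_proc Q"
| "fpv_proc (PSig P) = fpv_proc P"
| "fpv_proc (PTau P) = fpv_proc P"
| "fpv_proc (PSum P Q) = fpv_proc P \<union> fpv_proc Q"
| "fpv_proc (PCond b P Q) = fpv_proc P \<union> fpv_proc Q"
| "fpv_proc (PVar X) = {X}"
| "fpv_proc PNil = {}"
| "fpv_proc (PFix X P) = fpv_proc P - {X}"

definition closed_proc :: "('c,'x,'k,'op,'pv) proc \<Rightarrow> bool" where
  "closed_proc P \<longleftrightarrow> fv_proc P = {} \<and> fpv_proc P = {}"

fun closed_sys :: "('c,'x,'k,'op,'pv) sys \<Rightarrow> bool" where
  "closed_sys (SProc P) = closed_proc P"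
| "closed_sys (SARcv c x P) = (fv_proc P \<subseteq> {x} \<and> fpv_proc P = {})"
| "closed_sys (SPar W1 W2) = (closed_sys W1 \<and> closed_sys W2)"
| "closed_sys (SRes c n v W) = (closed_val v \<and> closed_sys W)"

fun unguarded :: "'pv \<Rightarrow> ('c,'x,'k,'op,'pv) proc \<Rightarrow> bool" where
  "unguarded X (PVar Y) = (X = Y)"
| "unguarded X (PTau P) = unguarded X P"
| "unguarded X (PSum P Q) = (unguarded X P \<or> unguarded X Q)"
| "unguarded X (PFix Y P) = (X \<noteq> Y \<and> unguarded X P)"
| "unguarded X _ = False"

fun guarded_proc :: "('c,'x,'k,'op,'pv) proc \<Rightarrow> bool" where
  "guarded_proc (PSnd c e P) = guarded_proc P"
| "guarded_proc (PRcv c x P Q) = (guarded_proc P \<and> guarded_proc Q)"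
| "guarded_proc (PSig P) = guarded_proc P"
| "guarded_proc (PTau P) = guarded_proc P"
| "guarded_proc (PSum P Q) = (guarded_proc P \<and> guarded_proc Q)"
| "guarded_proc (PCond b P Q) = (guarded_proc P \<and> guarded_proc Q)"
| "guarded_proc (PVar X) = True"
| "guarded_proc PNil = True"
| "guarded_proc (PFix X P) = (\<not> unguarded X P \<and> guarded_proc P)"

fun guarded_sys :: "('c,'x,'k,'op,'pv) sys \<Rightarrow> bool" where
  "guarded_sys (SProc P) = guarded_proc P"
| "guarded_sys (SARcv c x P) = guarded_proc P"
| "guarded_sys (SPar W1 W2) = (guarded_sys W1 \<and> guarded_sys W2)"
| "guarded_sys (SRes c n v W) = guarded_sys W"

section \<open>Substitution (only ever of closed terms, so no capture can arise)\<close>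

fun subst_val :: "'x \<Rightarrow> ('x,'k) val \<Rightarrow> ('x,'k) val \<Rightarrow> ('x,'k) val" where
  "subst_val x w (VVar y) = (if y = x then w else VVar y)"
| "subst_val x w v = v"

fun subst_exp :: "'x \<Rightarrow> ('x,'k) val \<Rightarrow> ('x,'k,'op) exp \<Rightarrow> ('x,'k,'op) exp" where
  "subst_exp x w (EVal v) = EVal (subst_val x w v)"
| "subst_exp x w (EOp f es) = EOp f (map (subst_exp x w) es)"

fun subst_bexp :: "'x \<Rightarrow> ('x,'k) val \<Rightarrow> ('c,'x,'k,'op) bexp \<Rightarrow> ('c,'x,'k,'op) bexp" where
  "subst_bexp x w (BEq e1 e2) = BEq (subst_exp x w e1) (subst_exp x w e2)"
| "subst_bexp x w (BExp c) = BExp c"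

fun subst_proc :: "'x \<Rightarrow> ('x,'k) val \<Rightarrow> ('c,'x,'k,'op,'pv) proc \<Rightarrow> ('c,'x,'k,'op,'pv) proc" where
  "subst_proc x w (PSnd c e P) = PSnd c (subst_exp x w e) (subst_proc x w P)"
| "subst_proc x w (PRcv c y P Q) =
     PRcv c y (if y = x then P else subst_proc x w P) (subst_proc x w Q)"
| "subst_proc x w (PSig P) = PSig (subst_proc x w P)"
| "subst_proc x w (PTau P) = PTau (subst_proc x w P)"
| "subst_proc x w (PSum P Q) = PSum (subst_proc x w P) (subst_proc x w Q)"
| "subst_proc x w (PCond b P Q) = PCond (subst_bexp x w b) (subst_proc x w P) (subst_proc x w Q)"
| "subst_proc x w (PVar X) = PVar X"
| "subst_proc x w PNil = PNil"
| "subst_proc x w (PFix X P) = PFix X (subst_proc x w P)"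

fun psubst :: "'pv \<Rightarrow> ('c,'x,'k,'op,'pv) proc \<Rightarrow> ('c,'x,'k,'op,'pv) proc \<Rightarrow> ('c,'x,'k,'op,'pv) proc" where
  "psubst X R (PSnd c e P) = PSnd c e (psubst X R P)"
| "psubst X R (PRcv c y P Q) = PRcv c y (psubst X R P) (psubst X R Q)"
| "psubst X R (PSig P) = PSig (psubst X R P)"
| "psubst X R (PTau P) = PTau (psubst X R P)"
| "psubst X R (PSum P Q) = PSum (psubst X R P) (psubst X R Q)"
| "psubst X R (PCond b P Q) = PCond b (psubst X R P) (psubst X R Q)"
| "psubst X R (PVar Y) = (if Y = X then R else PVar Y)"
| "psubst X R PNil = PNil"
| "psubst X R (PFix Y P) = (if Y = X then PFix Y P else PFix Y (psubst X R P))"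

fun sigmas :: "nat \<Rightarrow> ('c,'x,'k,'op,'pv) proc \<Rightarrow> ('c,'x,'k,'op,'pv) proc" where
  "sigmas 0 P = P"
| "sigmas (Suc n) P = PSig (sigmas n P)"

text \<open>\<open>I\<close> interprets operators; \<open>\<delta>\<close> gives transmission times.\<close>
fun eval :: "('op \<Rightarrow> ('x,'k) val list \<Rightarrow> ('x,'k) val) \<Rightarrow> ('x,'k,'op) exp \<Rightarrow> ('x,'k) val" where
  "eval I (EVal v) = v"
| "eval I (EOp f es) = I f (map (eval I) es)"

definition idle :: "('c,'x,'k) env \<Rightarrow> 'c \<Rightarrow> bool" where
  "idle \<Gamma> c \<longleftrightarrow> fst (\<Gamma> c) = 0"

definition exposed :: "('c,'x,'k) env \<Rightarrow> 'c \<Rightarrow> bool" where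
  "exposed \<Gamma> c \<longleftrightarrow> fst (\<Gamma> c) > 0"

fun beval :: "('op \<Rightarrow> ('x,'k) val list \<Rightarrow> ('x,'k) val) \<Rightarrow> ('c,'x,'k) env \<Rightarrow> ('c,'x,'k,'op) bexp \<Rightarrow> bool" where
  "beval I \<Gamma> (BEq e1 e2) = (eval I e1 = eval I e2)"
| "beval I \<Gamma> (BExp c) = exposed \<Gamma> c"

definition bcast_upd :: "(('x,'k) val \<Rightarrow> nat) \<Rightarrow> 'c \<Rightarrow> ('x,'k) val \<Rightarrow> ('c,'x,'k) env \<Rightarrow> ('c,'x,'k) env" where
  "bcast_upd \<delta> c v \<Gamma> = \<Gamma>(c := (if fst (\<Gamma> c) = 0 then (\<delta> v, v)
                                 else (max (\<delta> v) (fst (\<Gamma> c)), VErr)))"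

fun upd :: "(('x,'k) val \<Rightarrow> nat) \<Rightarrow> ('c,'x,'k) act \<Rightarrow> ('c,'x,'k) env \<Rightarrow> ('c,'x,'k) env" where
  "upd \<delta> ASig \<Gamma> = (\<lambda>c. (fst (\<Gamma> c) - 1, snd (\<Gamma> c)))"
| "upd \<delta> (AOut c v) \<Gamma> = bcast_upd \<delta> c v \<Gamma>"
| "upd \<delta> (AIn c v) \<Gamma> = bcast_upd \<delta> c v \<Gamma>"
| "upd \<delta> ATau \<Gamma> = \<Gamma>"

fun act_chans :: "('c,'x,'k) act \<Rightarrow> 'c set" where
  "act_chans (AOut c v) = {c}"
| "act_chans (AIn c v) = {c}"
| "act_chans _ = {}"

fun rcv_proc :: "('c,'x,'k,'op,'pv) proc \<Rightarrow> 'c \<Rightarrow> bool" where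
  "rcv_proc (PRcv d x P Q) c = (d = c)"
| "rcv_proc (PSum P Q) c = (rcv_proc P c \<or> rcv_proc Q c)"
| "rcv_proc (PFix X P) c = rcv_proc P c"
| "rcv_proc _ c = False"

text \<open>For a restriction, the bound channel is (by alpha-conversion) distinct from c;
  with named binders this means that receivers on the bound name do not count.\<close>
fun rcv_sys :: "('c,'x,'k,'op,'pv) sys \<Rightarrow> 'c \<Rightarrow> bool" where
  "rcv_sys (SProc P) c = rcv_proc P c"
| "rcv_sys (SARcv d x P) c = False"
| "rcv_sys (SPar W1 W2) c = (rcv_sys W1 c \<or> rcv_sys W2 c)"
| "rcv_sys (SRes d n v W) c = (d \<noteq> c \<and> rcv_sys W c)"

definition rcv_conf :: "('c,'x,'k) env \<Rightarrow> ('c,'x,'k,'op,'pv) sys \<Rightarrow> 'c \<Rightarrow> bool" where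
  "rcv_conf \<Gamma> W c \<longleftrightarrow> idle \<Gamma> c \<and> rcv_sys W c"

inductive trans :: "(('x,'k) val \<Rightarrow> nat) \<Rightarrow> ('op \<Rightarrow> ('x,'k) val list \<Rightarrow> ('x,'k) val)
   \<Rightarrow> ('c,'x,'k) env \<Rightarrow> ('c,'x,'k,'op,'pv) sys \<Rightarrow> ('c,'x,'k) act \<Rightarrow> ('c,'x,'k,'op,'pv) sys \<Rightarrow> bool"
  for \<delta> I where
  Snd: "eval I e = v \<Longrightarrow> trans \<delta> I \<Gamma> (SProc (PSnd c e P)) (AOut c v) (SProc (sigmas (\<delta> v) P))"
| Rcv: "idle \<Gamma> c \<Longrightarrow> trans \<delta> I \<Gamma> (SProc (PRcv c x P Q)) (AIn c v) (SARcv c x P)"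
| RcvIgn: "\<not> rcv_conf \<Gamma> W c \<Longrightarrow> trans \<delta> I \<Gamma> W (AIn c v) W"
| Sync1: "trans \<delta> I \<Gamma> W1 (AOut c v) W1' \<Longrightarrow> trans \<delta> I \<Gamma> W2 (AIn c v) W2'
           \<Longrightarrow> trans \<delta> I \<Gamma> (SPar W1 W2) (AOut c v) (SPar W1' W2')"
| Sync2: "trans \<delta> I \<Gamma> W1 (AIn c v) W1' \<Longrightarrow> trans \<delta> I \<Gamma> W2 (AOut c v) W2'
           \<Longrightarrow> trans \<delta> I \<Gamma> (SPar W1 W2) (AOut c v) (SPar W1' W2')"
| RcvPar: "trans \<delta> I \<Gamma> W1 (AIn c v) W1' \<Longrightarrow> trans \<delta> I \<Gamma> W2 (AIn c v) W2'
           \<Longrightarrow> trans \<delta> I \<Gamma> (SPar W1 W2) (AIn c v) (SPar W1' W2')"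
| TimeNil: "trans \<delta> I \<Gamma> (SProc PNil) ASig (SProc PNil)"
| Sleep: "trans \<delta> I \<Gamma> (SProc (PSig P)) ASig (SProc P)"
| ActRcv: "fst (\<Gamma> c) > 1 \<Longrightarrow> trans \<delta> I \<Gamma> (SARcv c x P) ASig (SARcv c x P)"
| EndRcv: "\<Gamma> c = (1, w) \<Longrightarrow> trans \<delta> I \<Gamma> (SARcv c x P) ASig (SProc (subst_proc x w P))"
| Timeout: "idle \<Gamma> c \<Longrightarrow> trans \<delta> I \<Gamma> (SProc (PRcv c x P Q)) ASig (SProc Q)"
| RcvLate: "exposed \<Gamma> c \<Longrightarrow> trans \<delta> I \<Gamma> (SProc (PRcv c x P Q)) ATau (SARcv c x (subst_proc x VErr P))"
| Tau: "trans \<delta> I \<Gamma> (SProc (PTau P)) ATau (SProc P)"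
| Then: "beval I \<Gamma> b \<Longrightarrow> trans \<delta> I \<Gamma> (SProc (PCond b P Q)) ATau (SProc (PSig P))"
| Else: "\<not> beval I \<Gamma> b \<Longrightarrow> trans \<delta> I \<Gamma> (SProc (PCond b P Q)) ATau (SProc (PSig Q))"
| TimePar: "trans \<delta> I \<Gamma> W1 ASig W1' \<Longrightarrow> trans \<delta> I \<Gamma> W2 ASig W2'
           \<Longrightarrow> trans \<delta> I \<Gamma> (SPar W1 W2) ASig (SPar W1' W2')"
| TauPar1: "trans \<delta> I \<Gamma> W1 ATau W1' \<Longrightarrow> trans \<delta> I \<Gamma> (SPar W1 W2) ATau (SPar W1' W2)"
| TauPar2: "trans \<delta> I \<Gamma> W2 ATau W2' \<Longrightarrow> trans \<delta> I \<Gamma> (SPar W1 W2) ATau (SPar W1 W2')"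
| Rec: "trans \<delta> I \<Gamma> (SProc (psubst X (PFix X P) P)) a W \<Longrightarrow> trans \<delta> I \<Gamma> (SProc (PFix X P)) a W"
| Sum1: "(a = ATau \<or> (\<exists>c v. a = AOut c v)) \<Longrightarrow> trans \<delta> I \<Gamma> (SProc P) a W
           \<Longrightarrow> trans \<delta> I \<Gamma> (SProc (PSum P Q)) a W"
| Sum2: "(a = ATau \<or> (\<exists>c v. a = AOut c v)) \<Longrightarrow> trans \<delta> I \<Gamma> (SProc Q) a W
           \<Longrightarrow> trans \<delta> I \<Gamma> (SProc (PSum P Q)) a W"
| SumTime: "trans \<delta> I \<Gamma> (SProc P) ASig (SProc P') \<Longrightarrow> trans \<delta> I \<Gamma> (SProc Q) ASig (SProc Q')
           \<Longrightarrow> trans \<delta> I \<Gamma> (SProc (PSum P Q)) ASig (SProc (PSum P' Q'))"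
| SumRcv1: "trans \<delta> I \<Gamma> (SProc P) (AIn c v) W \<Longrightarrow> rcv_conf \<Gamma> (SProc P) c
           \<Longrightarrow> trans \<delta> I \<Gamma> (SProc (PSum P Q)) (AIn c v) W"
| SumRcv2: "trans \<delta> I \<Gamma> (SProc Q) (AIn c v) W \<Longrightarrow> rcv_conf \<Gamma> (SProc Q) c
           \<Longrightarrow> trans \<delta> I \<Gamma> (SProc (PSum P Q)) (AIn c v) W"
| ResI: "trans \<delta> I (\<Gamma>(c := (n, v))) W (AOut c w) W'
           \<Longrightarrow> (n', v') = upd \<delta> (AOut c w) (\<Gamma>(c := (n, v))) c
           \<Longrightarrow> trans \<delta> I \<Gamma> (SRes c n v W) ATau (SRes c n' v' W')"
| ResV: "trans \<delta> I (\<Gamma>(c := (n, v))) W a W' \<Longrightarrow> c \<notin> act_chans a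
           \<Longrightarrow> (n', v') = upd \<delta> a (\<Gamma>(c := (n, v))) c
           \<Longrightarrow> trans \<delta> I \<Gamma> (SRes c n v W) a (SRes c n' v' W')"

definition red_i :: "(('x,'k) val \<Rightarrow> nat) \<Rightarrow> ('op \<Rightarrow> ('x,'k) val list \<Rightarrow> ('x,'k) val)
   \<Rightarrow> ('c,'x,'k) env \<times> ('c,'x,'k,'op,'pv) sys \<Rightarrow> ('c,'x,'k) env \<times> ('c,'x,'k,'op,'pv) sys \<Rightarrow> bool" where
  "red_i \<delta> I C C' \<longleftrightarrow> (\<exists>a. (a = ATau \<or> (\<exists>c v. a = AOut c v)) \<and>
      trans \<delta> I (fst C) (snd C) a (snd C') \<and> fst C' = upd \<delta> a (fst C))"

definition red_sigma :: "(('x,'k) val \<Rightarrow> nat) \<Rightarrow> ('op \<Rightarrow> ('x,'k) val list \<Rightarrow> ('x,'k) val)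
   \<Rightarrow> ('c,'x,'k) env \<times> ('c,'x,'k,'op,'pv) sys \<Rightarrow> ('c,'x,'k) env \<times> ('c,'x,'k,'op,'pv) sys \<Rightarrow> bool" where
  "red_sigma \<delta> I C C' \<longleftrightarrow>
      trans \<delta> I (fst C) (snd C) ASig (snd C') \<and> fst C' = upd \<delta> ASig (fst C)"

fun wf_sys :: "('c,'x,'k) env \<Rightarrow> ('c,'x,'k,'op,'pv) sys \<Rightarrow> bool" where
  "wf_sys \<Gamma> (SProc P) = True"
| "wf_sys \<Gamma> (SARcv c x P) = exposed \<Gamma> c"
| "wf_sys \<Gamma> (SPar W1 W2) = (wf_sys \<Gamma> W1 \<and> wf_sys \<Gamma> W2)"
| "wf_sys \<Gamma> (SRes c n v W) = wf_sys (\<Gamma>(c := (n, v))) W"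

text \<open>A configuration: environment mapping channels to N x closed values, and a
  closed system term (whose fix-bodies are guarded, a standing syntactic condition).\<close>
definition configuration :: "('c,'x,'k) env \<times> ('c,'x,'k,'op,'pv) sys \<Rightarrow> bool" where
  "configuration C \<longleftrightarrow> (\<forall>c. closed_val (snd (fst C c))) \<and> closed_sys (snd C) \<and> guarded_sys (snd C)"

definition well_formed :: "('c,'x,'k) env \<times> ('c,'x,'k,'op,'pv) sys \<Rightarrow> bool" where
  "well_formed C \<longleftrightarrow> configuration C \<and> wf_sys (fst C) (snd C)"

end

theory Submission
  imports Defs
begin

(* The proof
   establishes a stronger progress property by structural induction on system
   terms: every well-formed closed guarded term either performs an
   instantaneous action or a sigma-step.
   1. Recursion: unfolding a guarded closed fix yields a guarded closed term of
      smaller "unfolding depth" (nesting of sums and fixes at the top), which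
      is the measure for the inductions on processes.
   2. Input-enabledness: every closed guarded term can perform c?v for every
      c and v; this supplies the receivers needed to synchronise broadcasts in
      parallel compositions.
   3. Progress for processes, then for parallel composition and restriction,
      and finally for all system terms.
   The theorem follows: as there is no instantaneous reduction, the progress
   property yields a sigma-step, hence a timed reduction. *)

definition instantaneous :: "('c,'x,'k) act \<Rightarrow> bool" where
  "instantaneous a \<longleftrightarrow> a = ATau \<or> (\<exists>c v. a = AOut c v)"

definition can_act_instantly ::
  "(('x,'k) val \<Rightarrow> nat) \<Rightarrow> ('op \<Rightarrow> ('x,'k) val list \<Rightarrow> ('x,'k) val)
   \<Rightarrow> ('c,'x,'k) env \<Rightarrow> ('c,'x,'k,'op,'pv) sys \<Rightarrow> bool" where
  "can_act_instantly \<delta> I \<Gamma> W \<longleftrightarrow> (\<exists>a W'. instantaneous a \<and> trans \<delta> I \<Gamma> W a W')"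

(* Nesting depth of sums and fixes at the top of a process; the rules Sum and
   Rec are the only ones that do not consume a prefix of the process. *)
fun unfold_depth :: "('c,'x,'k,'op,'pv) proc \<Rightarrow> nat" where
  "unfold_depth (PSum P Q) = Suc (unfold_depth P + unfold_depth Q)"
| "unfold_depth (PFix X P) = Suc (unfold_depth P)"
| "unfold_depth _ = 0"

lemma unguarded_free: "unguarded X P \<Longrightarrow> X \<in> fpv_proc P"
  by (induction X P rule: unguarded.induct) auto

lemma unguarded_psubst:
  "unguarded Y (psubst X R P) \<Longrightarrow> unguarded Y P \<or> Y \<in> fpv_proc R"
  by (induction P) (auto split: if_splits dest: unguarded_free)

lemma fpv_psubst: "fpv_proc (psubst X R P) \<subseteq> (fpv_proc P - {X}) \<union> fpv_proc R"
  by (induction P) auto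

lemma guarded_psubst:
  "guarded_proc P \<Longrightarrow> guarded_proc R \<Longrightarrow> fpv_proc R = {} \<Longrightarrow> guarded_proc (psubst X R P)"
  by (induction P) (auto dest: unguarded_psubst)

(* Substituting for guarded occurrences only changes terms below a prefix. *)
lemma unfold_depth_psubst: "\<not> unguarded X P \<Longrightarrow> unfold_depth (psubst X R P) = unfold_depth P"
  by (induction P) auto

lemma rcv_psubst: "rcv_proc P c \<Longrightarrow> rcv_proc (psubst X R P) c"
  by (induction P) auto

lemma fix_unfold:
  assumes "guarded_proc (PFix X P)" and "fpv_proc (PFix X P) = {}"
  shows "guarded_proc (psubst X (PFix X P) P)"
    and "fpv_proc (psubst X (PFix X P) P) = {}"
    and "unfold_depth (psubst X (PFix X P) P) < unfold_depth (PFix X P)"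
  using assms guarded_psubst[of P "PFix X P" X] fpv_psubst[of X "PFix X P" P]
    unfold_depth_psubst[of X P "PFix X P"]
  by auto

lemma receive_proc:
  "guarded_proc P \<Longrightarrow> fpv_proc P = {} \<Longrightarrow> rcv_proc P c \<Longrightarrow> idle \<Gamma> c
   \<Longrightarrow> \<exists>W. trans \<delta> I \<Gamma> (SProc P) (AIn c v) W"
proof (induction "unfold_depth P" arbitrary: P rule: less_induct)
  case less
  show ?case
  proof (cases P)
    case (PRcv d x P1 Q1)
    then show ?thesis using less.prems by (auto intro: trans.Rcv)
  next
    case (PSum P1 Q1)
    show ?thesis
    proof (cases "rcv_proc P1 c")
      case True
      then obtain W where "trans \<delta> I \<Gamma> (SProc P1) (AIn c v) W"
        using less PSum by fastforce
      then show ?thesis using PSum True less.prems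
        by (auto intro!: trans.SumRcv1 simp: rcv_conf_def)
    next
      case False
      then have "rcv_proc Q1 c" using less.prems PSum by auto
      then obtain W where "trans \<delta> I \<Gamma> (SProc Q1) (AIn c v) W"
        using less PSum by fastforce
      then show ?thesis using PSum \<open>rcv_proc Q1 c\<close> less.prems
        by (auto intro!: trans.SumRcv2 simp: rcv_conf_def)
    qed
  next
    case (PFix X P1)
    then have "rcv_proc (psubst X (PFix X P1) P1) c"
      using less.prems rcv_psubst by auto
    moreover note fix_unfold[of X P1]
    ultimately obtain W where "trans \<delta> I \<Gamma> (SProc (psubst X (PFix X P1) P1)) (AIn c v) W"
      using less PFix by (metis unfold_depth.simps(2))
    then show ?thesis using PFix by (auto intro: trans.Rec)
  qed (use less.prems in auto)
qed

lemma input_enabled: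
  "closed_sys W \<Longrightarrow> guarded_sys W \<Longrightarrow> \<exists>W'. trans \<delta> I \<Gamma> W (AIn c v) W'"
proof (induction W arbitrary: \<Gamma>)
  case (SProc P)
  then show ?case
    using receive_proc[of P c \<Gamma> \<delta> I v] trans.RcvIgn[of \<Gamma> "SProc P" c \<delta> I v]
    by (auto simp: rcv_conf_def closed_proc_def)
next
  case (SARcv d x P)
  then show ?case by (metis rcv_conf_def rcv_sys.simps(2) trans.RcvIgn)
next
  case (SPar W1 W2)
  then show ?case by (meson closed_sys.simps(3) guarded_sys.simps(3) trans.RcvPar)
next
  case (SRes d n w W)
  show ?case
  proof (cases "d = c")
    case True
    then show ?thesis by (metis rcv_conf_def rcv_sys.simps(4) trans.RcvIgn)
  next
    case False
    obtain W' where "trans \<delta> I (\<Gamma>(d := (n, w))) W (AIn c v) W'"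
      using SRes by auto
    with False show ?thesis
      by (metis act_chans.simps(2) singletonD surj_pair trans.ResV)
  qed
qed

lemma progress_proc:
  "guarded_proc P \<Longrightarrow> fpv_proc P = {}
   \<Longrightarrow> can_act_instantly \<delta> I \<Gamma> (SProc P) \<or> (\<exists>P'. trans \<delta> I \<Gamma> (SProc P) ASig (SProc P'))"
proof (induction "unfold_depth P" arbitrary: P rule: less_induct)
  case less
  show ?case
  proof (cases P)
    case (PSnd c e P1)
    then show ?thesis
      by (auto simp: can_act_instantly_def instantaneous_def intro: trans.Snd)
  next
    case (PRcv d x P1 Q1)
    show ?thesis
    proof (cases "idle \<Gamma> d")
      case True
      then show ?thesis using PRcv trans.Timeout by fast
    next
      case False
      then have "exposed \<Gamma> d" by (simp add: idle_def exposed_def)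
      then show ?thesis using PRcv trans.RcvLate
        by (fastforce simp: can_act_instantly_def instantaneous_def)
    qed
  next
    case (PTau P1)
    then show ?thesis
      by (auto simp: can_act_instantly_def instantaneous_def intro: trans.Tau)
  next
    case (PCond b P1 Q1)
    then show ?thesis
      by (cases "beval I \<Gamma> b")
        (auto simp: can_act_instantly_def instantaneous_def intro: trans.Then trans.Else)
  next
    case (PSum P1 Q1)
    then have "can_act_instantly \<delta> I \<Gamma> (SProc P1) \<or> (\<exists>P'. trans \<delta> I \<Gamma> (SProc P1) ASig (SProc P'))"
      and "can_act_instantly \<delta> I \<Gamma> (SProc Q1) \<or> (\<exists>P'. trans \<delta> I \<Gamma> (SProc Q1) ASig (SProc P'))"
      using less by auto
    then show ?thesis using PSum
      by (metis can_act_instantly_def instantaneous_def trans.Sum1 trans.Sum2 trans.SumTime)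
  next
    case (PFix X P1)
    let ?U = "psubst X (PFix X P1) P1"
    have "can_act_instantly \<delta> I \<Gamma> (SProc ?U) \<or> (\<exists>P'. trans \<delta> I \<Gamma> (SProc ?U) ASig (SProc P'))"
      using less.hyps fix_unfold[of X P1] less.prems PFix by simp
    then show ?thesis
      using PFix by (auto intro: trans.Rec simp: can_act_instantly_def)
  qed (use less.prems in \<open>auto intro: trans.Sleep trans.TimeNil\<close>)
qed

(* An instantaneous action of one component becomes one of the parallel
   composition: tau interleaves, a broadcast synchronises with the other
   component, which is input-enabled. *)
lemma par_instant:
  assumes "\<And>c v. \<exists>W2'. trans \<delta> I \<Gamma> W2 (AIn c v) W2'"
  shows "can_act_instantly \<delta> I \<Gamma> W1 \<Longrightarrow> can_act_instantly \<delta> I \<Gamma> (SPar W1 W2)"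
    and "can_act_instantly \<delta> I \<Gamma> W1 \<Longrightarrow> can_act_instantly \<delta> I \<Gamma> (SPar W2 W1)"
proof -
  assume "can_act_instantly \<delta> I \<Gamma> W1"
  then obtain a W1' where "trans \<delta> I \<Gamma> W1 a W1'"
    and "a = ATau \<or> (\<exists>c v. a = AOut c v)"
    by (auto simp: can_act_instantly_def instantaneous_def)
  then consider "trans \<delta> I \<Gamma> W1 ATau W1'"
    | c v W2' where "trans \<delta> I \<Gamma> W1 (AOut c v) W1'" "trans \<delta> I \<Gamma> W2 (AIn c v) W2'"
    using assms by blast
  then have "(\<exists>a W'. instantaneous a \<and> trans \<delta> I \<Gamma> (SPar W1 W2) a W')
    \<and> (\<exists>a W'. instantaneous a \<and> trans \<delta> I \<Gamma> (SPar W2 W1) a W')"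
    by cases (auto simp: instantaneous_def
        intro: trans.TauPar1 trans.TauPar2 trans.Sync1 trans.Sync2)
  then show "can_act_instantly \<delta> I \<Gamma> (SPar W1 W2)"
    and "can_act_instantly \<delta> I \<Gamma> (SPar W2 W1)"
    by (auto simp: can_act_instantly_def)
qed

(* A restriction can act instantly whenever its body can: a broadcast on the
   bound channel becomes tau (ResI), any other action is kept (ResV). *)
lemma res_instant:
  assumes "can_act_instantly \<delta> I (\<Gamma>(d := (n, w))) W"
  shows "can_act_instantly \<delta> I \<Gamma> (SRes d n w W)"
proof -
  obtain a W' where a: "instantaneous a" "trans \<delta> I (\<Gamma>(d := (n, w))) W a W'"
    using assms by (auto simp: can_act_instantly_def)
  obtain n' v' where upd: "(n', v') = upd \<delta> a (\<Gamma>(d := (n, w))) d"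
    by (metis surj_pair)
  show ?thesis
  proof (cases "\<exists>v. a = AOut d v")
    case True
    then obtain v where "a = AOut d v" by blast
    then have "trans \<delta> I \<Gamma> (SRes d n w W) ATau (SRes d n' v' W')"
      using a upd by (metis trans.ResI)
    then show ?thesis by (auto simp: can_act_instantly_def instantaneous_def)
  next
    case False
    then have "d \<notin> act_chans a" using a(1) by (auto simp: instantaneous_def)
    then show ?thesis using a upd
      by (auto simp: can_act_instantly_def intro: trans.ResV)
  qed
qed

lemma progress:
  "closed_sys W \<Longrightarrow> guarded_sys W \<Longrightarrow> wf_sys \<Gamma> W
   \<Longrightarrow> can_act_instantly \<delta> I \<Gamma> W \<or> (\<exists>W'. trans \<delta> I \<Gamma> W ASig W')"
proof (induction W arbitrary: \<Gamma>)
  case (SProc P)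
  then show ?case using progress_proc[of P \<delta> I \<Gamma>] by (auto simp: closed_proc_def)
next
  case (SARcv c x P)
  (* well-formedness: the channel of an active receiver is exposed, so the
     receiver either keeps listening or completes its reception *)
  then have "fst (\<Gamma> c) > 0" by (simp add: exposed_def)
  then have "fst (\<Gamma> c) > 1 \<or> \<Gamma> c = (1, snd (\<Gamma> c))"
    by (metis less_one nat_neq_iff prod.collapse)
  then show ?case by (blast intro: trans.ActRcv trans.EndRcv)
next
  case (SPar W1 W2)
  have "\<And>c v. \<exists>W'. trans \<delta> I \<Gamma> W1 (AIn c v) W'" "\<And>c v. \<exists>W'. trans \<delta> I \<Gamma> W2 (AIn c v) W'"
    using SPar.prems input_enabled by auto
  moreover have "can_act_instantly \<delta> I \<Gamma> W1 \<or> (\<exists>W'. trans \<delta> I \<Gamma> W1 ASig W')"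
    and "can_act_instantly \<delta> I \<Gamma> W2 \<or> (\<exists>W'. trans \<delta> I \<Gamma> W2 ASig W')"
    using SPar by simp_all
  ultimately show ?case
    using par_instant(1)[of \<delta> I \<Gamma> W2 W1] par_instant(2)[of \<delta> I \<Gamma> W1 W2]
    by (blast intro: trans.TimePar)
next
  case (SRes d n w W)
  then have "can_act_instantly \<delta> I (\<Gamma>(d := (n, w))) W
    \<or> (\<exists>W'. trans \<delta> I (\<Gamma>(d := (n, w))) W ASig W')"
    by simp
  moreover have "\<exists>W''. trans \<delta> I \<Gamma> (SRes d n w W) ASig W''"
    if "trans \<delta> I (\<Gamma>(d := (n, w))) W ASig W'" for W'
  proof -
    obtain n' v' where "(n', v') = upd \<delta> ASig (\<Gamma>(d := (n, w))) d" by (metis surj_pair)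
    then show ?thesis using that trans.ResV[of \<delta> I \<Gamma> d n w W ASig W'] by auto
  qed
  ultimately show ?case using res_instant by metis
qed

theorem mainTheorem11:
  fixes \<delta> :: "('x,'k) val \<Rightarrow> nat"
    and I :: "'op \<Rightarrow> ('x,'k) val list \<Rightarrow> ('x,'k) val"
    and C :: "('c,'x,'k) env \<times> ('c,'x,'k,'op,'pv) sys"
  assumes delta_pos: "\<forall>v. closed_val v \<longrightarrow> \<delta> v \<ge> 1"
    and eval_closed: "\<forall>f vs. (\<forall>v\<in>set vs. closed_val v) \<longrightarrow> closed_val (I f vs)"
    and wf: "well_formed C"
    and no_inst: "\<not> (\<exists>C'. red_i \<delta> I C C')"
  shows "\<exists>C''. red_sigma \<delta> I C C''"
proof -
  have "\<not> can_act_instantly \<delta> I (fst C) (snd C)"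
  proof
    assume "can_act_instantly \<delta> I (fst C) (snd C)"
    then obtain a W' where "instantaneous a" "trans \<delta> I (fst C) (snd C) a W'"
      by (auto simp: can_act_instantly_def)
    then have "red_i \<delta> I C (upd \<delta> a (fst C), W')"
      unfolding red_i_def instantaneous_def by auto
    with no_inst show False by blast
  qed
  moreover have "can_act_instantly \<delta> I (fst C) (snd C) \<or> (\<exists>W'. trans \<delta> I (fst C) (snd C) ASig W')"
    using wf progress by (auto simp: well_formed_def configuration_def)
  ultimately obtain W' where "trans \<delta> I (fst C) (snd C) ASig W'" by blast
  then have "red_sigma \<delta> I C (upd \<delta> ASig (fst C), W')" by (simp add: red_sigma_def)
  then show ?thesis by blast
qed

end
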